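(* Let $G$ be a connected graph on $n$ nodes with degree vector $\mathbf d=(d_1,\dots,d_n)^T$, Laplacian $L$ and average degree $\bar d=\frac1n\sum_i d_i$. Suppose there exist a vector $\beta\in\mathbb R^n$ and a constant $C$ such that, componentwise, $$\mathbf d\;\le\;\frac{1}{2\log2}L\beta+\frac{C\bar d}{\log 2}\mathbf 1 .$$ Then there exists $k\in\{1,\dots,n\}$ and a constant $c_C$ depending only on $C$ such that, for the averaging process started at $v(0)=e_k$ (the $k$-th standard basis vector), for every $\epsilon<1$, $$\mathbb E\|v(t)-\bar v\|_1\ge\epsilon\quad\text{whenever}\quad t\le\frac{(1-\epsilon)\,n\log n}{2C}-c_C\,n .$$
   Context: Let $G=(V,E)$ be a finite, undirected graph with $V=\{1,\dots,n\}$. The averaging process on $G$: the state vector $v(t)\in\mathbb R^n$, $t=0,1,2,\dots$, starts from a given $v(0)$; at each step $t\ge 1$ an edge $\{i,j\}\in E$ is chosen uniformly at random (independently of all previous choices) and both $v_i$ and $v_j$ are replaced by $(v_i+v_j)/2$, all other coordinates unchanged. Let $\bar v=(a,\dots,a)^T$ with $a=\frac1n\sum_i v_i(0)$. $L=D-A$ is the graph Laplacian and $\mathbf 1$ the all-ones vector. Logarithms are natural. *)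

theory Defs
  imports Main Complex_Main
begin

text \<open>Graphs on vertex set {0..<n}; edges are two-element sets of vertices.
  Vectors in R^n are functions nat => real, only the values at i < n matter.\<close>

definition simple_graph :: "nat \<Rightarrow> nat set set \<Rightarrow> bool" where
  "simple_graph n E \<longleftrightarrow> (\<forall>e\<in>E. \<exists>i j. i < n \<and> j < n \<and> i \<noteq> j \<and> e = {i, j})"

definition adj :: "nat set set \<Rightarrow> nat \<Rightarrow> nat \<Rightarrow> bool" where
  "adj E i j \<longleftrightarrow> i \<noteq> j \<and> {i, j} \<in> E"

definition graph_connected :: "nat \<Rightarrow> nat set set \<Rightarrow> bool" where
  "graph_connected n E \<longleftrightarrow> (\<forall>i<n. \<forall>j<n. (i, j) \<in> {(x, y). adj E x y}\<^sup>*)"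

definition degree :: "nat set set \<Rightarrow> nat \<Rightarrow> nat" where
  "degree E i = card {e \<in> E. i \<in> e}"

definition avg_degree :: "nat \<Rightarrow> nat set set \<Rightarrow> real" where
  "avg_degree n E = (\<Sum>i<n. real (degree E i)) / real n"

definition laplacian_mult :: "nat \<Rightarrow> nat set set \<Rightarrow> (nat \<Rightarrow> real) \<Rightarrow> nat \<Rightarrow> real" where
  "laplacian_mult n E \<beta> i = real (degree E i) * \<beta> i - (\<Sum>j\<in>{j. j < n \<and> adj E i j}. \<beta> j)"

definition avg_step :: "nat set \<Rightarrow> (nat \<Rightarrow> real) \<Rightarrow> (nat \<Rightarrow> real)" where
  "avg_step e v = (\<lambda>k. if k \<in> e then (\<Sum>j\<in>e. v j) / 2 else v k)"

fun run_avg :: "(nat \<Rightarrow> real) \<Rightarrow> nat set list \<Rightarrow> (nat \<Rightarrow> real)" where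
  "run_avg v [] = v"
| "run_avg v (e # es) = run_avg (avg_step e v) es"

definition mean_val :: "nat \<Rightarrow> (nat \<Rightarrow> real) \<Rightarrow> real" where
  "mean_val n v = (\<Sum>i<n. v i) / real n"

definition l1_dev :: "nat \<Rightarrow> (nat \<Rightarrow> real) \<Rightarrow> (nat \<Rightarrow> real) \<Rightarrow> real" where
  "l1_dev n v0 v = (\<Sum>i<n. \<bar>v i - mean_val n v0\<bar>)"

text \<open>E ||v(t) - vbar||_1 : edges chosen i.i.d. uniformly from E, so every edge sequence of
  length t has probability 1/|E|^t.\<close>
definition expected_l1_dev :: "nat \<Rightarrow> nat set set \<Rightarrow> (nat \<Rightarrow> real) \<Rightarrow> nat \<Rightarrow> real" where
  "expected_l1_dev n E v0 t =
     (\<Sum>es\<in>{es. set es \<subseteq> E \<and> length es = t}. l1_dev n v0 (run_avg v0 es)) / real (card E) ^ t"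

definition basis_vec :: "nat \<Rightarrow> nat \<Rightarrow> real" where
  "basis_vec k = (\<lambda>i. if i = k then 1 else 0)"

end

theory Submission
  imports Defs
begin

(* For a probability vector v let Psi(v) = <beta, v> + H(v) (the potential below), with the
   entropy H(v) = - sum_i v_i ln v_i.  Averaging along an edge {i,j} raises H by at most
   ln 2 (v_i + v_j) and changes <beta, v> by -(beta_i - beta_j)(v_i - v_j)/2, so a uniformly random
   step raises Psi in expectation by at most v^T (ln 2 d - L beta / 2) / |E| <= C dbar / |E| = 2C/n.
   Started at e_k with beta_k minimal, E Psi(v(t)) <= beta_k + 2Ct/n; on the other hand
   Psi(v) >= beta_k + H(v), and the Fannes-type bound H(v) >= ln n (1 - ||v - vbar||_1 / 2) - 1 turns
   the slow growth of the entropy into E ||v(t) - vbar||_1 >= 2 eps as long as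
   2Ct/n <= (1 - eps) ln n - 1.  Summing the hypothesis over all vertices (1^T L = 0) shows
   C >= ln 2, so c_C = 1/(2C) is a valid constant. *)

lemma simple_graph_edgeE:
  assumes "simple_graph n E" "e \<in> E"
  obtains i j where "i < n" "j < n" "i \<noteq> j" "e = {i,j}"
  using assms unfolding simple_graph_def by blast

lemma simple_graph_finite: "simple_graph n E \<Longrightarrow> finite E"
  by (rule finite_subset[of _ "Pow {..<n}"]) (auto simp: simple_graph_def)

lemma graph_connected_edges_nonempty:
  assumes "graph_connected n E" "2 \<le> n"
  shows "E \<noteq> {}"
proof
  assume "E = {}"
  then have "{(x, y). adj E x y} = {}" by (auto simp: adj_def)
  moreover have "(0, 1) \<in> {(x, y). adj E x y}\<^sup>*"
    using assms unfolding graph_connected_def by auto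
  ultimately show False by simp
qed

lemma sum_edges_swap:
  assumes "simple_graph n E"
  shows "(\<Sum>e\<in>E. \<Sum>x\<in>e. F e x) = (\<Sum>x<n. \<Sum>e\<in>{e\<in>E. x \<in> e}. F e x)"
proof -
  have sub: "\<And>e. e \<in> E \<Longrightarrow> e \<subseteq> {..<n}"
    using assms by (auto simp: simple_graph_def)
  have "(\<Sum>e\<in>E. \<Sum>x\<in>e. F e x) = (\<Sum>e\<in>E. \<Sum>x<n. if x \<in> e then F e x else 0)"
    using sub by (intro sum.cong refl sum.mono_neutral_cong_left) auto
  also have "\<dots> = (\<Sum>x<n. \<Sum>e\<in>E. if x \<in> e then F e x else 0)"
    by (rule sum.swap)
  also have "\<dots> = (\<Sum>x<n. \<Sum>e\<in>{e\<in>E. x \<in> e}. F e x)"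
    using simple_graph_finite[OF assms] by (simp add: sum.inter_filter)
  finally show ?thesis .
qed

lemma sum_degree_eq_twice_card:
  assumes "simple_graph n E"
  shows "(\<Sum>x<n. real (degree E x)) = 2 * real (card E)"
proof -
  have "(\<Sum>x<n. real (degree E x)) = (\<Sum>e\<in>E. \<Sum>x\<in>e. 1)"
    using sum_edges_swap[OF assms, of "\<lambda>_ _. 1 :: real"] by (simp add: degree_def)
  also have "\<dots> = (\<Sum>e\<in>E. 2)"
    by (rule sum.cong[OF refl]) (auto elim: simple_graph_edgeE[OF assms])
  finally show ?thesis by simp
qed

lemma sum_incident_edges:
  assumes "simple_graph n E" "x < n"
  shows "(\<Sum>e\<in>{e\<in>E. x \<in> e}. \<Sum>y\<in>e - {x}. f y) = (\<Sum>y\<in>{y. y < n \<and> adj E x y}. f y)"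
proof -
  have incident: "{e\<in>E. x \<in> e} = (\<lambda>y. {x,y}) ` {y. y < n \<and> adj E x y}"
  proof (intro equalityI subsetI)
    fix e assume e: "e \<in> {e\<in>E. x \<in> e}"
    then obtain i j where "i < n" "j < n" "i \<noteq> j" "e = {i,j}"
      using simple_graph_edgeE[OF assms(1)] by blast
    with e show "e \<in> (\<lambda>y. {x,y}) ` {y. y < n \<and> adj E x y}"
      by (auto simp: adj_def insert_commute image_iff)
  qed (auto simp: adj_def)
  have "inj_on (\<lambda>y. {x,y}) {y. y < n \<and> adj E x y}"
    by (auto simp: inj_on_def doubleton_eq_iff)
  then have "(\<Sum>e\<in>{e\<in>E. x \<in> e}. \<Sum>y\<in>e - {x}. f y) = (\<Sum>y\<in>{y. y < n \<and> adj E x y}. \<Sum>z\<in>{x,y} - {x}. f z)"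
    unfolding incident by (simp add: sum.reindex)
  also have "\<dots> = (\<Sum>y\<in>{y. y < n \<and> adj E x y}. f y)"
    by (rule sum.cong) (auto simp: adj_def)
  finally show ?thesis .
qed

lemma laplacian_mult_eq_sum_incident_edges:
  assumes "simple_graph n E" "x < n"
  shows "laplacian_mult n E \<beta> x = (\<Sum>e\<in>{e\<in>E. x \<in> e}. \<beta> x - (\<Sum>y\<in>e - {x}. \<beta> y))"
  by (simp add: laplacian_mult_def degree_def sum_subtractf sum_incident_edges[OF assms])

lemma sum_laplacian_mult_eq_0:
  assumes "simple_graph n E"
  shows "(\<Sum>x<n. laplacian_mult n E \<beta> x) = 0"
proof -
  have "(\<Sum>x<n. laplacian_mult n E \<beta> x)
      = (\<Sum>x<n. \<Sum>e\<in>{e\<in>E. x \<in> e}. \<beta> x - (\<Sum>y\<in>e - {x}. \<beta> y))"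
    using laplacian_mult_eq_sum_incident_edges[OF assms] by simp
  also have "\<dots> = (\<Sum>e\<in>E. \<Sum>x\<in>e. \<beta> x - (\<Sum>y\<in>e - {x}. \<beta> y))"
    by (rule sum_edges_swap[OF assms, symmetric])
  also have "\<dots> = 0"
    by (rule sum.neutral) (auto simp: insert_Diff_if elim!: simple_graph_edgeE[OF assms])
  finally show ?thesis .
qed

lemma ln2_le_of_degree_bound:
  assumes G: "simple_graph n E" and "E \<noteq> {}"
    and bound: "\<forall>i<n. real (degree E i) \<le> laplacian_mult n E \<beta> i / (2 * ln 2) + C * avg_degree n E / ln 2"
  shows "ln 2 \<le> C"
proof -
  have m: "0 < real (card E)"
    using assms simple_graph_finite[OF G] by (simp add: card_gt_0_iff)
  have "(\<Sum>i<n. real (degree E i)) \<le> (\<Sum>i<n. laplacian_mult n E \<beta> i / (2 * ln 2) + C * avg_degree n E / ln 2)"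
    using bound by (intro sum_mono) auto
  also have "\<dots> = C * (\<Sum>i<n. real (degree E i)) / ln 2"
    using sum_laplacian_mult_eq_0[OF G]
    by (simp add: sum.distrib sum_divide_distrib[symmetric] avg_degree_def)
  finally have "2 * real (card E) * ln 2 \<le> C * (2 * real (card E))"
    by (simp add: sum_degree_eq_twice_card[OF G] field_simps)
  then show ?thesis using m by simp
qed

definition prob_vec :: "nat \<Rightarrow> (nat \<Rightarrow> real) \<Rightarrow> bool" where
  "prob_vec n v \<longleftrightarrow> (\<forall>i<n. 0 \<le> v i) \<and> (\<Sum>i<n. v i) = 1"

lemma sum_avg_step:
  fixes g :: "nat \<Rightarrow> real \<Rightarrow> real"
  assumes "i < n" "j < n" "i \<noteq> j"
  shows "(\<Sum>k<n. g k (avg_step {i,j} v k)) = (\<Sum>k<n. g k (v k))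
     + (g i ((v i + v j) / 2) - g i (v i)) + (g j ((v i + v j) / 2) - g j (v j))"
proof -
  have "(\<Sum>k<n. g k (avg_step {i,j} v k) - g k (v k))
      = (\<Sum>k\<in>{i,j}. g k (avg_step {i,j} v k) - g k (v k))"
    using assms by (intro sum.mono_neutral_right) (auto simp: avg_step_def)
  also have "\<dots> = (g i ((v i + v j) / 2) - g i (v i)) + (g j ((v i + v j) / 2) - g j (v j))"
    using assms by (simp add: avg_step_def)
  finally show ?thesis by (simp add: sum_subtractf)
qed

lemma prob_vec_le_1:
  assumes "prob_vec n v" "i < n"
  shows "v i \<le> 1"
proof -
  have "v i \<le> (\<Sum>j<n. v j)"
    using assms by (intro member_le_sum) (auto simp: prob_vec_def)
  then show ?thesis using assms(1) by (simp add: prob_vec_def)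
qed

lemma prob_vec_basis_vec: "k < n \<Longrightarrow> prob_vec n (basis_vec k)"
  by (simp add: prob_vec_def basis_vec_def)

lemma prob_vec_avg_step:
  assumes "prob_vec n v" "i < n" "j < n" "i \<noteq> j"
  shows "prob_vec n (avg_step {i,j} v)"
proof -
  have "(\<Sum>k<n. avg_step {i,j} v k) = (\<Sum>k<n. v k)"
    using sum_avg_step[OF assms(2-4), where g = "\<lambda>_ x. x"] by (simp add: field_simps)
  moreover have "\<forall>k<n. 0 \<le> avg_step {i,j} v k"
    using assms by (auto simp: prob_vec_def avg_step_def)
  ultimately show ?thesis using assms(1) by (simp add: prob_vec_def)
qed

lemma prob_vec_run_avg:
  assumes "simple_graph n E" "prob_vec n v" "set es \<subseteq> E"
  shows "prob_vec n (run_avg v es)"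
  using assms(2,3)
proof (induction es arbitrary: v)
  case Nil
  then show ?case by simp
next
  case (Cons e es)
  then have "e \<in> E" by simp
  then obtain i j where "i < n" "j < n" "i \<noteq> j" "e = {i,j}"
    by (rule simple_graph_edgeE[OF assms(1)])
  then have "prob_vec n (avg_step e v)" using prob_vec_avg_step Cons.prems by blast
  then show ?case using Cons by simp
qed

definition potential :: "nat \<Rightarrow> (nat \<Rightarrow> real) \<Rightarrow> (nat \<Rightarrow> real) \<Rightarrow> real" where
  "potential n \<beta> v = (\<Sum>k<n. \<beta> k * v k - v k * ln (v k))"

lemma xlnx_add_le:
  fixes a b :: real
  assumes "0 \<le> a" "0 \<le> b"
  shows "a * ln a + b * ln b \<le> (a + b) * ln (a + b)"
proof -
  have "x * ln x \<le> x * ln (a + b)" if "0 \<le> x" "x \<le> a + b" for x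
    using that by (cases "x = 0") (auto intro!: mult_left_mono)
  then have "a * ln a + b * ln b \<le> a * ln (a + b) + b * ln (a + b)"
    using assms by (intro add_mono) auto
  then show ?thesis by (simp add: algebra_simps)
qed

lemma potential_avg_step_le:
  assumes "i < n" "j < n" "i \<noteq> j" "0 \<le> v i" "0 \<le> v j"
  shows "potential n \<beta> (avg_step {i,j} v)
    \<le> potential n \<beta> v + ln 2 * (v i + v j) - (\<beta> i - \<beta> j) * (v i - v j) / 2"
proof -
  define a where "a = (v i + v j) / 2"
  have "potential n \<beta> (avg_step {i,j} v) = potential n \<beta> v
      + (\<beta> i * a - a * ln a - (\<beta> i * v i - v i * ln (v i)))
      + (\<beta> j * a - a * ln a - (\<beta> j * v j - v j * ln (v j)))"
    unfolding potential_def a_def by (rule sum_avg_step[OF assms(1-3)])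
  moreover have "(v i + v j) * ln (v i + v j) = 2 * (a * ln a) + ln 2 * (v i + v j)"
  proof (cases "a = 0")
    case False
    then have "ln (v i + v j) = ln a + ln 2"
      using assms(4,5) by (simp add: a_def ln_div)
    then show ?thesis by (simp add: a_def algebra_simps)
  qed (simp add: a_def)
  moreover have "\<beta> i * a + \<beta> j * a - \<beta> i * v i - \<beta> j * v j = - (\<beta> i - \<beta> j) * (v i - v j) / 2"
    by (simp add: a_def field_simps)
  ultimately show ?thesis
    using xlnx_add_le[OF assms(4,5)] by linarith
qed

lemma sum_potential_avg_step_le:
  assumes G: "simple_graph n E" and v: "prob_vec n v"
    and K: "\<forall>x<n. ln 2 * real (degree E x) - laplacian_mult n E \<beta> x / 2 \<le> K"
  shows "(\<Sum>e\<in>E. potential n \<beta> (avg_step e v)) \<le> real (card E) * potential n \<beta> v + K"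
proof -
  let ?gain = "\<lambda>e x. v x * (ln 2 - (\<beta> x - (\<Sum>y\<in>e - {x}. \<beta> y)) / 2)"
  have edge: "potential n \<beta> (avg_step e v) \<le> potential n \<beta> v + (\<Sum>x\<in>e. ?gain e x)"
    if "e \<in> E" for e
  proof -
    obtain i j where ij: "i < n" "j < n" "i \<noteq> j" "e = {i,j}"
      using simple_graph_edgeE[OF G \<open>e \<in> E\<close>] .
    have gain: "(\<Sum>x\<in>{i,j}. ?gain {i,j} x) = ln 2 * (v i + v j) - (\<beta> i - \<beta> j) * (v i - v j) / 2"
      using ij by (simp add: insert_Diff_if field_simps)
    have "0 \<le> v i" "0 \<le> v j"
      using v ij by (auto simp: prob_vec_def)
    from potential_avg_step_le[OF ij(1-3) this, of \<beta>] show ?thesis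
      unfolding ij(4) gain by simp
  qed
  have vertex: "(\<Sum>e\<in>{e\<in>E. x \<in> e}. ?gain e x)
      = v x * (ln 2 * real (degree E x) - laplacian_mult n E \<beta> x / 2)" if "x < n" for x
    unfolding laplacian_mult_eq_sum_incident_edges[OF G that] degree_def
    by (simp add: sum_distrib_left[symmetric] sum_divide_distrib[symmetric] sum_subtractf algebra_simps)
  have "(\<Sum>e\<in>E. potential n \<beta> (avg_step e v)) \<le> (\<Sum>e\<in>E. potential n \<beta> v + (\<Sum>x\<in>e. ?gain e x))"
    using edge by (rule sum_mono)
  also have "\<dots> = real (card E) * potential n \<beta> v
      + (\<Sum>x<n. v x * (ln 2 * real (degree E x) - laplacian_mult n E \<beta> x / 2))"
    by (simp add: sum.distrib sum_edges_swap[OF G] vertex)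
  also have "\<dots> \<le> real (card E) * potential n \<beta> v + (\<Sum>x<n. v x * K)"
    using v K by (auto simp: prob_vec_def intro!: sum_mono mult_left_mono)
  also have "\<dots> = real (card E) * potential n \<beta> v + K"
    using v by (simp add: prob_vec_def sum_distrib_right[symmetric])
  finally show ?thesis .
qed

abbreviation edge_seqs :: "nat set set \<Rightarrow> nat \<Rightarrow> nat set list set" where
  "edge_seqs E t \<equiv> {es. set es \<subseteq> E \<and> length es = t}"

lemma sum_edge_seqs_Suc:
  assumes "finite E"
  shows "(\<Sum>es\<in>edge_seqs E (Suc t). f (run_avg v es))
       = (\<Sum>e\<in>E. \<Sum>es\<in>edge_seqs E t. f (run_avg (avg_step e v) es))"
proof -
  have "inj_on (\<lambda>(es, e). e # es) (edge_seqs E t \<times> E)"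
    by (auto simp: inj_on_def)
  then have "(\<Sum>es\<in>edge_seqs E (Suc t). f (run_avg v es))
      = (\<Sum>(es, e)\<in>edge_seqs E t \<times> E. f (run_avg v (e # es)))"
    unfolding lists_length_Suc_eq by (simp add: sum.reindex case_prod_beta')
  also have "\<dots> = (\<Sum>e\<in>E. \<Sum>es\<in>edge_seqs E t. f (run_avg (avg_step e v) es))"
    by (simp add: sum.cartesian_product[symmetric] sum.swap[of _ E])
  finally show ?thesis .
qed

lemma sum_potential_run_avg_le:
  assumes G: "simple_graph n E" and "E \<noteq> {}"
    and K: "\<forall>x<n. ln 2 * real (degree E x) - laplacian_mult n E \<beta> x / 2 \<le> K"
    and "prob_vec n v"
  shows "(\<Sum>es\<in>edge_seqs E t. potential n \<beta> (run_avg v es))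
    \<le> real (card E) ^ t * (potential n \<beta> v + real t * K / real (card E))"
  using \<open>prob_vec n v\<close>
proof (induction t arbitrary: v)
  case 0
  have "edge_seqs E 0 = {[]}" by auto
  then show ?case by simp
next
  case (Suc t)
  let ?m = "real (card E)"
  have m: "0 < ?m"
    using assms simple_graph_finite[OF G] by (simp add: card_gt_0_iff)
  have "(\<Sum>es\<in>edge_seqs E (Suc t). potential n \<beta> (run_avg v es))
      = (\<Sum>e\<in>E. \<Sum>es\<in>edge_seqs E t. potential n \<beta> (run_avg (avg_step e v) es))"
    by (rule sum_edge_seqs_Suc[OF simple_graph_finite[OF G]])
  also have "\<dots> \<le> (\<Sum>e\<in>E. ?m ^ t * (potential n \<beta> (avg_step e v) + real t * K / ?m))"
  proof (rule sum_mono)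
    fix e assume "e \<in> E"
    then obtain i j where "i < n" "j < n" "i \<noteq> j" "e = {i,j}"
      by (rule simple_graph_edgeE[OF G])
    then show "(\<Sum>es\<in>edge_seqs E t. potential n \<beta> (run_avg (avg_step e v) es))
        \<le> ?m ^ t * (potential n \<beta> (avg_step e v) + real t * K / ?m)"
      using prob_vec_avg_step Suc by blast
  qed
  also have "\<dots> = ?m ^ t * ((\<Sum>e\<in>E. potential n \<beta> (avg_step e v)) + real t * K)"
    using m by (simp add: sum_distrib_left[symmetric] sum.distrib)
  also have "\<dots> \<le> ?m ^ t * (?m * potential n \<beta> v + K + real t * K)"
    using sum_potential_avg_step_le[OF G Suc.prems K] by (intro mult_left_mono) auto
  also have "\<dots> = ?m ^ Suc t * (potential n \<beta> v + real (Suc t) * K / ?m)"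
    using m by (simp add: field_simps)
  finally show ?case .
qed

lemma xlnx_le_min:
  fixes N x :: real
  assumes N: "1 \<le> N" and x: "0 \<le> x" "x \<le> 1"
  shows "x * ln x \<le> x - ln N * min x (1 / N)"
proof (cases "x \<le> 1 / N")
  case True
  have "x * ln x \<le> x - x * ln N"
  proof (cases "x = 0")
    case False
    then have "ln x + ln N = ln (x * N)" and "x * N \<le> 1"
      using x N True by (simp_all add: ln_mult field_simps)
    then have "ln x + ln N \<le> 0"
      using x N False by simp
    then have "x * (ln x + ln N) \<le> 0"
      using x by (simp add: mult_nonneg_nonpos)
    then show ?thesis
      using x by (simp add: distrib_left)
  qed simp
  then show ?thesis using True by (simp add: mult.commute)
next
  case False
  then have "1 < N * x"
    using N by (simp add: field_simps)
  then have "0 < x"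
    using x by (cases "x = 0") auto
  then have ln_x: "ln x = ln (N * x) - ln N"
    using N by (simp add: ln_mult)
  have "(x - 1 / N) * ln (N * x) \<le> (x - 1 / N) * ln N"
    using False \<open>0 < x\<close> x(2) N by (intro mult_left_mono) (auto simp: mult_left_le)
  then have "x * ln x + ln N / N \<le> ln (N * x) / N"
    unfolding ln_x by (simp add: algebra_simps)
  also have "\<dots> \<le> (N * x - 1) / N"
    using \<open>1 < N * x\<close> N by (intro divide_right_mono ln_le_minus_one) auto
  also have "\<dots> \<le> x"
    using N by (simp add: field_simps)
  finally show ?thesis using False by simp
qed

lemma sum_xlnx_le_l1_dist_uniform:
  assumes w: "prob_vec n w" and "0 < n"
  shows "(\<Sum>i<n. w i * ln (w i)) \<le> 1 - ln n + ln n * (\<Sum>i<n. \<bar>w i - 1 / n\<bar>) / 2"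
proof -
  have min_eq: "min a b = (a + b - \<bar>a - b\<bar>) / 2" for a b :: real
    by (simp add: min_def)
  have "(\<Sum>i<n. w i * ln (w i)) \<le> (\<Sum>i<n. w i - ln n * min (w i) (1 / n))"
    using w \<open>0 < n\<close> prob_vec_le_1[OF w]
    by (intro sum_mono xlnx_le_min) (auto simp: prob_vec_def)
  also have "\<dots> = 1 - ln n * (2 - (\<Sum>i<n. \<bar>w i - 1 / n\<bar>)) / 2"
    using w \<open>0 < n\<close>
    by (simp add: min_eq sum_subtractf sum.distrib sum_distrib_left[symmetric]
        sum_divide_distrib[symmetric] prob_vec_def)
  also have "\<dots> = 1 - ln n + ln n * (\<Sum>i<n. \<bar>w i - 1 / n\<bar>) / 2"
    by (simp add: field_simps)
  finally show ?thesis .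
qed

lemma potential_ge_l1_dev:
  assumes w: "prob_vec n w" and v0: "prob_vec n v0" and "0 < n"
    and k: "k < n" "\<forall>i<n. \<beta> k \<le> \<beta> i"
  shows "\<beta> k - 1 + ln n * (1 - l1_dev n v0 w / 2) \<le> potential n \<beta> w"
proof -
  have "\<beta> k = \<beta> k * (\<Sum>i<n. w i)"
    using w by (simp add: prob_vec_def)
  also have "\<dots> = (\<Sum>i<n. \<beta> k * w i)"
    by (rule sum_distrib_left)
  also have "\<dots> \<le> (\<Sum>i<n. \<beta> i * w i)"
    using w k by (intro sum_mono mult_right_mono) (auto simp: prob_vec_def)
  finally have "\<beta> k \<le> (\<Sum>i<n. \<beta> i * w i)" .
  moreover have "potential n \<beta> w = (\<Sum>i<n. \<beta> i * w i) - (\<Sum>i<n. w i * ln (w i))"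
    by (simp add: potential_def sum_subtractf)
  moreover have "mean_val n v0 = 1 / n"
    using v0 by (simp add: mean_val_def prob_vec_def)
  then have "l1_dev n v0 w = (\<Sum>i<n. \<bar>w i - 1 / n\<bar>)"
    by (simp add: l1_dev_def)
  moreover have "ln n * (1 - S / 2) = ln n - ln n * S / 2" for S :: real
    by (simp add: algebra_simps)
  ultimately show ?thesis
    using sum_xlnx_le_l1_dist_uniform[OF w \<open>0 < n\<close>] by (simp only:)
qed

lemma expected_l1_dev_lower_bound:
  assumes G: "simple_graph n E" and "E \<noteq> {}" and "0 < n"
    and K: "\<forall>x<n. ln 2 * real (degree E x) - laplacian_mult n E \<beta> x / 2 \<le> K"
    and k: "k < n" "\<forall>i<n. \<beta> k \<le> \<beta> i"
  shows "ln n * (1 - expected_l1_dev n E (basis_vec k) t / 2) \<le> 1 + real t * K / real (card E)"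
proof -
  let ?v0 = "basis_vec k"
  let ?M = "real (card E) ^ t"
  define D where "D = expected_l1_dev n E ?v0 t"
  have "0 < card E"
    using assms simple_graph_finite[OF G] by (simp add: card_gt_0_iff)
  then have "0 < ?M" by simp
  have card_seqs: "card (edge_seqs E t) = card E ^ t"
    by (rule card_lists_length_eq[OF simple_graph_finite[OF G]])
  have v0: "prob_vec n ?v0"
    using k(1) by (rule prob_vec_basis_vec)
  have "potential n \<beta> ?v0 = (\<Sum>i<n. if i = k then \<beta> k else 0)"
    unfolding potential_def basis_vec_def by (rule sum.cong) auto
  then have "potential n \<beta> ?v0 = \<beta> k"
    using k by simp
  have "?M * (\<beta> k - 1 + ln n * (1 - D / 2))
      = (\<Sum>es\<in>edge_seqs E t. \<beta> k - 1 + ln n * (1 - l1_dev n ?v0 (run_avg ?v0 es) / 2))"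
    using \<open>0 < card E\<close> unfolding D_def expected_l1_dev_def
    by (simp add: card_seqs sum.distrib sum_subtractf sum_distrib_left[symmetric]
        sum_divide_distrib[symmetric] algebra_simps)
  also have "\<dots> \<le> (\<Sum>es\<in>edge_seqs E t. potential n \<beta> (run_avg ?v0 es))"
    using prob_vec_run_avg[OF G v0] potential_ge_l1_dev[OF _ v0 \<open>0 < n\<close> k]
    by (intro sum_mono) auto
  also have "\<dots> \<le> ?M * (\<beta> k + real t * K / real (card E))"
    using sum_potential_run_avg_le[OF G \<open>E \<noteq> {}\<close> K v0] \<open>potential n \<beta> ?v0 = \<beta> k\<close> by simp
  finally have "\<beta> k - 1 + ln n * (1 - D / 2) \<le> \<beta> k + real t * K / real (card E)"
    using \<open>0 < ?M\<close> by simp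
  then show ?thesis unfolding D_def by simp
qed

lemma expected_l1_dev_ge_before_mixing:
  assumes G: "simple_graph n E" and "E \<noteq> {}" and n: "2 \<le> n"
    and bound: "\<forall>i<n. real (degree E i) \<le> laplacian_mult n E \<beta> i / (2 * ln 2) + C * avg_degree n E / ln 2"
    and k: "k < n" "\<forall>i<n. \<beta> k \<le> \<beta> i"
    and t: "real t \<le> (1 - \<epsilon>) * real n * ln (real n) / (2 * C) - 1 / (2 * C) * real n"
  shows "2 * \<epsilon> \<le> expected_l1_dev n E (basis_vec k) t"
proof -
  let ?m = "real (card E)" and ?N = "real n"
  have "0 < ?m"
    using assms simple_graph_finite[OF G] by (simp add: card_gt_0_iff)
  have "0 < C"
    using ln2_le_of_degree_bound[OF G \<open>E \<noteq> {}\<close> bound] ln_gt_zero[of 2] by linarith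
  have "0 < ln ?N"
    using n by simp
  have "\<forall>x<n. ln 2 * real (degree E x) - laplacian_mult n E \<beta> x / 2 \<le> C * avg_degree n E"
    using bound by (auto simp: field_simps)
  from expected_l1_dev_lower_bound[OF G \<open>E \<noteq> {}\<close> _ this k, where t = t]
  have "ln ?N * (1 - expected_l1_dev n E (basis_vec k) t / 2) \<le> 1 + 2 * C * real t / ?N"
    using n \<open>0 < ?m\<close> by (simp add: avg_degree_def sum_degree_eq_twice_card[OF G] mult_ac)
  also have "\<dots> \<le> ln ?N * (1 - \<epsilon>)"
  proof -
    have "(1 - \<epsilon>) * ?N * ln ?N / (2 * C) - 1 / (2 * C) * ?N = ((1 - \<epsilon>) * ln ?N - 1) * ?N / (2 * C)"
      by (simp add: diff_divide_distrib add_divide_distrib algebra_simps)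
    with t have "2 * C * real t \<le> ((1 - \<epsilon>) * ln ?N - 1) * ?N"
      using \<open>0 < C\<close> by (simp add: pos_le_divide_eq mult_ac)
    then show ?thesis
      using n by (simp add: field_simps)
  qed
  finally show ?thesis
    using \<open>0 < ln ?N\<close> by (simp add: mult_le_cancel_left_pos)
qed

theorem theorem5:
  fixes C :: real
  shows "\<exists>cC :: real. \<forall>(n::nat) (E::nat set set) (\<beta>::nat \<Rightarrow> real).
     simple_graph n E \<and> graph_connected n E \<and> 2 \<le> n \<and>
     (\<forall>i<n. real (degree E i) \<le> laplacian_mult n E \<beta> i / (2 * ln 2) + C * avg_degree n E / ln 2)
     \<longrightarrow> (\<exists>k<n. \<forall>(\<epsilon>::real) (t::nat). \<epsilon> < 1 \<and>
            real t \<le> (1 - \<epsilon>) * real n * ln (real n) / (2 * C) - cC * real n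
            \<longrightarrow> \<epsilon> \<le> expected_l1_dev n E (basis_vec k) t)"
proof (intro exI[of _ "1 / (2 * C)"] allI impI)
  fix n E and \<beta> :: "nat \<Rightarrow> real"
  assume "simple_graph n E \<and> graph_connected n E \<and> 2 \<le> n \<and>
     (\<forall>i<n. real (degree E i) \<le> laplacian_mult n E \<beta> i / (2 * ln 2) + C * avg_degree n E / ln 2)"
  then have G: "simple_graph n E" and "E \<noteq> {}" and n: "2 \<le> n"
    and bound: "\<forall>i<n. real (degree E i) \<le> laplacian_mult n E \<beta> i / (2 * ln 2) + C * avg_degree n E / ln 2"
    using graph_connected_edges_nonempty by auto
  obtain k where "is_arg_min \<beta> (\<lambda>i. i \<in> {..<n}) k"
    using ex_is_arg_min_if_finite[of "{..<n}" \<beta>] n by (auto simp: lessThan_empty_iff)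
  then have k: "k < n" "\<forall>i<n. \<beta> k \<le> \<beta> i"
    by (auto simp: is_arg_min_linorder)
  show "\<exists>k<n. \<forall>\<epsilon> t. \<epsilon> < 1 \<and>
      real t \<le> (1 - \<epsilon>) * real n * ln (real n) / (2 * C) - 1 / (2 * C) * real n
      \<longrightarrow> \<epsilon> \<le> expected_l1_dev n E (basis_vec k) t"
  proof (intro exI[of _ k] conjI allI impI)
    fix \<epsilon> t
    assume "\<epsilon> < 1 \<and> real t \<le> (1 - \<epsilon>) * real n * ln (real n) / (2 * C) - 1 / (2 * C) * real n"
    then have "2 * \<epsilon> \<le> expected_l1_dev n E (basis_vec k) t"
      using expected_l1_dev_ge_before_mixing[OF G \<open>E \<noteq> {}\<close> n bound k] by blast
    moreover have "0 \<le> expected_l1_dev n E (basis_vec k) t"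
      unfolding expected_l1_dev_def l1_dev_def by (intro divide_nonneg_nonneg sum_nonneg) auto
    ultimately show "\<epsilon> \<le> expected_l1_dev n E (basis_vec k) t"
      by linarith
  qed (rule k(1))
qed

end
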